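(* Let $n\ge1$, $I=\{1,\dots,n\}$, and let $x,\sigma_1,\dots,\sigma_n,\tau_1,\dots,\tau_n$ be independent indeterminates; write $\sigma=(\sigma_i)_{i\in I}$, $\tau=(\tau_i)_{i\in I}$. For $j\in I$ let $\beta_j(\sigma,\tau)$ be the multiset $\{\sigma_i-\sigma_j: i\in I\}\cup\{\tau_i+\sigma_j: i\in I\}$, let $\phi_j(x;\sigma,\tau)=\phi(x;\beta_j(\sigma,\tau))$, and $\Phi(x;\sigma,\tau)=\sum_{j\in I}\phi_j(x;\sigma,\tau)$. Then $\Phi(x;\sigma,\tau)=\Phi(x;\tau,\sigma)$, where $\Phi(x;\tau,\sigma)$ is obtained by interchanging the roles of $\sigma$ and $\tau$.
   Context: For a multiset $\beta$, $\phi(x;\beta)=\prod_{b\in\beta,\,b\neq0}\frac{b-x}{b}$ (product with multiplicity over the nonzero elements; here this omits exactly the elements $\sigma_j-\sigma_j=0$). *)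

theory Defs
  imports Main "HOL-Library.Multiset"
begin

definition phi :: "'a::field \<Rightarrow> 'a multiset \<Rightarrow> 'a" where
  "phi x \<beta> = prod_mset (image_mset (\<lambda>b. (b - x) / b) (filter_mset (\<lambda>b. b \<noteq> 0) \<beta>))"

definition beta :: "nat \<Rightarrow> (nat \<Rightarrow> 'a::field) \<Rightarrow> (nat \<Rightarrow> 'a) \<Rightarrow> nat \<Rightarrow> 'a multiset" where
  "beta n \<sigma> \<tau> j = image_mset (\<lambda>i. \<sigma> i - \<sigma> j) (mset_set {1..n})
                 + image_mset (\<lambda>i. \<tau> i + \<sigma> j) (mset_set {1..n})"

definition Phi :: "nat \<Rightarrow> 'a::field \<Rightarrow> (nat \<Rightarrow> 'a) \<Rightarrow> (nat \<Rightarrow> 'a) \<Rightarrow> 'a" where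
  "Phi n x \<sigma> \<tau> = (\<Sum>j\<in>{1..n}. phi x (beta n \<sigma> \<tau> j))"

end

theory Submission
  imports Defs "HOL-Computational_Algebra.Polynomial"
begin

text \<open>
  Let A be the disjoint union of the points \<open>\<sigma>\<^sub>i\<close> and \<open>-\<tau>\<^sub>i\<close>, with weight
  \<open>c = x\<close> on the former and \<open>c = -x\<close> on the latter. Then \<open>x \<phi>\<^sub>j(x;\<sigma>,\<tau>)\<close> and
  \<open>-x \<phi>\<^sub>j(x;\<tau>,\<sigma>)\<close> are the values of \<open>c\<^sub>a \<Prod>\<^bsub>b\<noteq>a\<^esub> (a - b + c\<^sub>b)/(a - b)\<close> at
  \<open>a = \<sigma>\<^sub>j\<close> and at \<open>a = -\<tau>\<^sub>j\<close>. This term is \<open>P(a) / \<Prod>\<^bsub>b\<noteq>a\<^esub> (a - b)\<close> for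
  \<open>P = \<Prod>\<^sub>b (X - b + c\<^sub>b) - \<Prod>\<^sub>b (X - b)\<close>, which has degree \<open>< |A|\<close>; so by Lagrange
  interpolation the terms sum to the coefficient of \<open>X\<^bsup>|A|-1\<^esup>\<close> in P, namely
  \<open>\<Sum>\<^sub>a c\<^sub>a = 0\<close>.
\<close>

lemma linear_factors_prod_coeffs:
  fixes e :: "'b \<Rightarrow> 'a::comm_ring_1"
  assumes "finite A"
  defines "Q \<equiv> \<Prod>b\<in>A. [:e b, 1:]"
  shows "degree Q = card A" and "coeff Q (card A) = 1"
    and "A \<noteq> {} \<Longrightarrow> coeff Q (card A - 1) = sum e A"
proof -
  have "degree Q = card A \<and> coeff Q (card A) = 1 \<and> (A \<noteq> {} \<longrightarrow> coeff Q (card A - 1) = sum e A)"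
    unfolding Q_def using assms(1)
  proof (induction A rule: finite_induct)
    case empty
    then show ?case by simp
  next
    case (insert y A)
    define R where "R = (\<Prod>b\<in>A. [:e b, 1:])"
    have prod_insert: "(\<Prod>b\<in>insert y A. [:e b, 1:]) = smult (e y) R + pCons 0 R"
      using insert by (simp add: R_def mult_pCons_left)
    have deg: "degree R = card A" and lead: "coeff R (card A) = 1"
      using insert by (auto simp: R_def)
    have "degree (smult (e y) R + pCons 0 R) \<le> Suc (card A)"
      by (rule degree_le) (auto simp: coeff_eq_0 deg coeff_pCons split: nat.splits)
    moreover have "coeff (smult (e y) R + pCons 0 R) (Suc (card A)) = 1"
      using lead by (simp add: coeff_eq_0 deg)
    moreover have "coeff (smult (e y) R + pCons 0 R) (card A) = e y + sum e A"
    proof (cases "A = {}")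
      case True
      then show ?thesis using lead by (simp add: R_def)
    next
      case False
      then obtain m where m: "card A = Suc m"
        using insert by (metis card_gt_0_iff gr0_implies_Suc)
      then have "coeff R m = sum e A" using insert False by (simp add: R_def)
      then show ?thesis using lead m by simp
    qed
    ultimately show ?case using insert prod_insert
      by (auto intro!: antisym le_degree)
  qed
  then show "degree Q = card A" and "coeff Q (card A) = 1"
    and "A \<noteq> {} \<Longrightarrow> coeff Q (card A - 1) = sum e A" by blast+
qed

lemma lagrange_interpolation:
  fixes P :: "'a::field poly"
  assumes "finite A" and "degree P < card A"
  shows "P = (\<Sum>a\<in>A. smult (poly P a / (\<Prod>b\<in>A-{a}. a - b)) (\<Prod>b\<in>A-{a}. [:- b, 1:]))"
    (is "P = ?L")
proof (rule sym, rule poly_eqI_degree[of A])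
  fix a0 assume a0: "a0 \<in> A"
  have "poly ?L a0 = (\<Sum>a\<in>A. poly P a / (\<Prod>b\<in>A-{a}. a - b) * (\<Prod>b\<in>A-{a}. a0 - b))"
    by (simp add: poly_sum poly_prod)
  also have "\<dots> = (\<Sum>a\<in>A. if a = a0 then poly P a0 else 0)"
  proof (rule sum.cong)
    fix a
    have "(\<Prod>b\<in>A-{a}. a0 - b) = 0" if "a \<noteq> a0"
      using assms(1) a0 that by (intro prod_zero) auto
    moreover have "(\<Prod>b\<in>A-{a}. a - b) \<noteq> 0"
      using assms(1) by simp
    ultimately show "poly P a / (\<Prod>b\<in>A-{a}. a - b) * (\<Prod>b\<in>A-{a}. a0 - b)
        = (if a = a0 then poly P a0 else 0)" by auto
  qed simp
  also have "\<dots> = poly P a0" using assms(1) a0 by simp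
  finally show "poly ?L a0 = poly P a0" .
next
  have "degree (\<Prod>b\<in>A-{a}. [:- b, 1:]) = card A - 1" if "a \<in> A" for a
    using linear_factors_prod_coeffs(1)[of "A - {a}" uminus] assms(1) that by simp
  then have "degree ?L \<le> card A - 1"
    by (intro degree_sum_le) (auto intro: order.trans[OF degree_smult_le] simp: assms(1))
  then show "degree ?L < card A" using assms(2) by linarith
qed (fact assms(2))

lemma sum_div_prod_diff_eq_coeff:
  fixes P :: "'a::field poly"
  assumes "finite A" and "degree P < card A"
  shows "(\<Sum>a\<in>A. poly P a / (\<Prod>b\<in>A-{a}. a - b)) = coeff P (card A - 1)"
proof -
  have "coeff (\<Prod>b\<in>A-{a}. [:- b, 1:]) (card A - 1) = 1" if "a \<in> A" for a
    using linear_factors_prod_coeffs(2)[of "A - {a}" uminus] assms(1) that by simp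
  then have "coeff P (card A - 1) = (\<Sum>a\<in>A. poly P a / (\<Prod>b\<in>A-{a}. a - b))"
    by (subst lagrange_interpolation[OF assms]) (simp add: coeff_sum)
  then show ?thesis ..
qed

lemma sum_weighted_prod_shifted_ratios:
  fixes c :: "'a::field \<Rightarrow> 'a"
  assumes "finite A"
  shows "(\<Sum>a\<in>A. c a * (\<Prod>b\<in>A-{a}. (a - b + c b) / (a - b))) = sum c A"
proof (cases "A = {}")
  case True
  then show ?thesis by simp
next
  case False
  define N where "N = (\<Prod>b\<in>A. [:c b - b, 1:])"
  define D where "D = (\<Prod>b\<in>A. [:- b, 1:])"
  note N = linear_factors_prod_coeffs[OF assms, of "\<lambda>b. c b - b", folded N_def]
  note D = linear_factors_prod_coeffs[OF assms, of uminus, folded D_def]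
  have "card A > 0" using assms False by (simp add: card_gt_0_iff)
  have "degree (N - D) \<le> card A - 1"
  proof (rule degree_le, intro allI impI)
    fix i assume "card A - 1 < i"
    then have "i = card A \<or> i > card A" using \<open>card A > 0\<close> by linarith
    then show "coeff (N - D) i = 0" using N D by (auto simp: coeff_eq_0)
  qed
  then have deg: "degree (N - D) < card A" using \<open>card A > 0\<close> by linarith
  have "poly (N - D) a / (\<Prod>b\<in>A-{a}. a - b) = c a * (\<Prod>b\<in>A-{a}. (a - b + c b) / (a - b))"
    if a: "a \<in> A" for a
  proof -
    have "poly N a = (\<Prod>b\<in>A. a - b + c b)"
      by (simp add: N_def poly_prod algebra_simps)
    also have "\<dots> = c a * (\<Prod>b\<in>A-{a}. a - b + c b)"
      using prod.remove[OF assms a, of "\<lambda>b. a - b + c b"] by simp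
    finally have "poly (N - D) a = c a * (\<Prod>b\<in>A-{a}. a - b + c b)"
      using assms a by (simp add: D_def poly_prod)
    then show ?thesis by (simp add: prod_dividef)
  qed
  then have "(\<Sum>a\<in>A. c a * (\<Prod>b\<in>A-{a}. (a - b + c b) / (a - b)))
      = coeff (N - D) (card A - 1)"
    using sum_div_prod_diff_eq_coeff[OF assms deg] by simp
  also have "\<dots> = sum c A"
    using N D False sum_negf[of "\<lambda>b. b" A] by (simp add: sum_subtractf)
  finally show ?thesis .
qed

lemma phi_image_mset_set:
  assumes "finite A"
  shows "phi x (image_mset f (mset_set A)) = (\<Prod>b\<in>{b\<in>A. f b \<noteq> 0}. (f b - x) / f b)"
  using assms
  by (simp add: phi_def filter_mset_image_mset multiset.map_comp o_def prod_unfold_prod_mset)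

lemma phi_zero [simp]: "phi 0 \<beta> = 1"
  unfolding phi_def by (rule prod_mset.neutral) auto

lemma sum_signed_phi:
  fixes \<epsilon> :: "'a::field \<Rightarrow> 'a"
  assumes "finite A" and sign: "\<And>b. b \<in> A \<Longrightarrow> \<epsilon> b = 1 \<or> \<epsilon> b = - 1"
  shows "(\<Sum>a\<in>A. \<epsilon> a * phi x (image_mset (\<lambda>b. \<epsilon> b * (b - a)) (mset_set A))) = sum \<epsilon> A"
proof (cases "x = 0")
  case True
  then show ?thesis by simp
next
  case False
  have summand: "x * (\<epsilon> a * phi x (image_mset (\<lambda>b. \<epsilon> b * (b - a)) (mset_set A)))
      = x * \<epsilon> a * (\<Prod>b\<in>A-{a}. (a - b + x * \<epsilon> b) / (a - b))" for a
  proof -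
    have "{b\<in>A. \<epsilon> b * (b - a) \<noteq> 0} = A - {a}" using sign by force
    moreover have "(\<epsilon> b * (b - a) - x) / (\<epsilon> b * (b - a)) = (a - b + x * \<epsilon> b) / (a - b)"
      if "b \<in> A" for b
      using sign[OF that] by (cases "b = a") (auto simp: field_simps)
    ultimately show ?thesis
      using assms(1) by (simp add: phi_image_mset_set)
  qed
  have "x * (\<Sum>a\<in>A. \<epsilon> a * phi x (image_mset (\<lambda>b. \<epsilon> b * (b - a)) (mset_set A)))
      = (\<Sum>a\<in>A. x * \<epsilon> a * (\<Prod>b\<in>A-{a}. (a - b + x * \<epsilon> b) / (a - b)))"
    unfolding sum_distrib_left by (intro sum.cong refl summand)
  also have "\<dots> = x * sum \<epsilon> A"
    using sum_weighted_prod_shifted_ratios[OF assms(1), of "\<lambda>b. x * \<epsilon> b"]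
    by (simp add: sum_distrib_left)
  finally show ?thesis using False by simp
qed

lemma image_mset_signed_shift_Un:
  fixes a :: "'a::comm_ring_1"
  assumes "finite S" and "finite T" and "S \<inter> T = {}"
    and "\<And>b. b \<in> S \<Longrightarrow> \<epsilon> b = 1" and "\<And>b. b \<in> T \<Longrightarrow> \<epsilon> b = - 1"
  shows "image_mset (\<lambda>b. \<epsilon> b * (b - a)) (mset_set (S \<union> T))
    = image_mset (\<lambda>b. b - a) (mset_set S) + image_mset (\<lambda>b. a - b) (mset_set T)"
proof -
  have "image_mset (\<lambda>b. \<epsilon> b * (b - a)) (mset_set S) = image_mset (\<lambda>b. b - a) (mset_set S)"
    using assms by (intro image_mset_cong) simp
  moreover have "image_mset (\<lambda>b. \<epsilon> b * (b - a)) (mset_set T) = image_mset (\<lambda>b. a - b) (mset_set T)"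
    using assms by (intro image_mset_cong) simp
  ultimately show ?thesis
    using assms by (simp only: mset_set_Union image_mset_union)
qed

lemma beta_eq_image_signed_shift:
  fixes \<sigma> \<tau> :: "nat \<Rightarrow> 'a::field"
  assumes inj_\<sigma>: "inj_on \<sigma> {1..n}" and inj_\<tau>: "inj_on (\<lambda>i. - \<tau> i) {1..n}"
    and disj: "\<sigma> ` {1..n} \<inter> (\<lambda>i. - \<tau> i) ` {1..n} = {}"
    and \<epsilon>_\<sigma>: "\<And>b. b \<in> \<sigma> ` {1..n} \<Longrightarrow> \<epsilon> b = 1"
    and \<epsilon>_\<tau>: "\<And>b. b \<in> (\<lambda>i. - \<tau> i) ` {1..n} \<Longrightarrow> \<epsilon> b = - 1"
  defines "A \<equiv> \<sigma> ` {1..n} \<union> (\<lambda>i. - \<tau> i) ` {1..n}"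
  shows "beta n \<sigma> \<tau> j = image_mset (\<lambda>b. \<epsilon> b * (b - \<sigma> j)) (mset_set A)"
    and "beta n \<tau> \<sigma> j = image_mset (\<lambda>b. \<epsilon> b * (b + \<tau> j)) (mset_set A)"
proof -
  have split: "image_mset (\<lambda>b. \<epsilon> b * (b - a)) (mset_set A)
      = image_mset (\<lambda>i. \<sigma> i - a) (mset_set {1..n}) + image_mset (\<lambda>i. a + \<tau> i) (mset_set {1..n})"
    for a
  proof -
    have "image_mset (\<lambda>b. \<epsilon> b * (b - a)) (mset_set A)
        = image_mset (\<lambda>b. b - a) (mset_set (\<sigma> ` {1..n}))
          + image_mset (\<lambda>b. a - b) (mset_set ((\<lambda>i. - \<tau> i) ` {1..n}))"
      unfolding A_def by (rule image_mset_signed_shift_Un[OF _ _ disj \<epsilon>_\<sigma> \<epsilon>_\<tau>]) simp_all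
    then show ?thesis
      unfolding image_mset_mset_set[OF inj_\<sigma>, symmetric] image_mset_mset_set[OF inj_\<tau>, symmetric]
      by (simp add: multiset.map_comp o_def)
  qed
  show "beta n \<sigma> \<tau> j = image_mset (\<lambda>b. \<epsilon> b * (b - \<sigma> j)) (mset_set A)"
    by (simp add: split beta_def add.commute)
  show "beta n \<tau> \<sigma> j = image_mset (\<lambda>b. \<epsilon> b * (b + \<tau> j)) (mset_set A)"
    using split[of "- \<tau> j"] by (simp add: beta_def ac_simps)
qed

theorem lemma4p3:
  fixes n :: nat and x :: "'a::field_char_0" and \<sigma> \<tau> :: "nat \<Rightarrow> 'a"
  assumes "n \<ge> 1"
    and "inj_on \<sigma> {1..n}"
    and "inj_on \<tau> {1..n}"
    and "\<forall>i\<in>{1..n}. \<forall>j\<in>{1..n}. \<tau> i + \<sigma> j \<noteq> 0"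
  shows "Phi n x \<sigma> \<tau> = Phi n x \<tau> \<sigma>"
proof -
  define S where "S = \<sigma> ` {1..n}"
  define T where "T = (\<lambda>i. - \<tau> i) ` {1..n}"
  define \<epsilon> where "\<epsilon> b = (if b \<in> S then 1 else - 1 :: 'a)" for b
  have inj_T: "inj_on (\<lambda>i. - \<tau> i) {1..n}"
    by (rule inj_onI) (use inj_onD[OF assms(3)] in simp)
  have disj: "S \<inter> T = {}"
    using assms(4) unfolding S_def T_def by (force simp: eq_neg_iff_add_eq_0 add.commute)
  have fin: "finite S" "finite T" by (simp_all add: S_def T_def)
  have \<epsilon>_S: "\<epsilon> b = 1" if "b \<in> S" for b
    using that by (simp add: \<epsilon>_def)
  have \<epsilon>_T: "\<epsilon> b = - 1" if "b \<in> T" for b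
    using that disj by (auto simp: \<epsilon>_def)
  note beta_eq = beta_eq_image_signed_shift[OF assms(2) inj_T disj[unfolded S_def T_def]
      \<epsilon>_S[unfolded S_def] \<epsilon>_T[unfolded T_def], folded S_def T_def]
  define g where "g a = \<epsilon> a * phi x (image_mset (\<lambda>b. \<epsilon> b * (b - a)) (mset_set (S \<union> T)))" for a
  have "sum g (S \<union> T) = sum \<epsilon> (S \<union> T)"
    unfolding g_def using fin \<epsilon>_S \<epsilon>_T by (intro sum_signed_phi) auto
  moreover have "sum g S = Phi n x \<sigma> \<tau>"
    unfolding S_def sum.reindex[OF assms(2)] Phi_def
    by (intro sum.cong) (simp_all add: g_def \<epsilon>_S[unfolded S_def] beta_eq)
  moreover have "sum g T = - Phi n x \<tau> \<sigma>"
    unfolding T_def sum.reindex[OF inj_T] Phi_def sum_negf[symmetric]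
    by (intro sum.cong) (simp_all add: g_def \<epsilon>_T[unfolded T_def] beta_eq)
  moreover have "sum \<epsilon> S + sum \<epsilon> T = 0"
    using assms(2) inj_T by (simp add: \<epsilon>_S \<epsilon>_T S_def T_def card_image)
  ultimately show ?thesis
    using fin disj by (simp add: sum.union_disjoint)
qed

end
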